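(* Let $N\xrightarrow{\tau}M$ be a transition of network states with $\mathrm{proc}(p,N)=\bigoplus_{i\in I}q_i!\lambda_i;P_i$ and $\mathrm{proc}(p,M)=\langle q_k!\lambda_k\rangle;P_k$ for some $k\in I$ (and $\mathrm{proc}(r,M)=\mathrm{proc}(r,N)$ for all other locations $r$). If $N\vdash_g G$, then $M\vdash_g G$.
   Context: Session calculus. Threads: $P ::= \mathbf{end} \mid \bigoplus_{i\in I} p_i!\lambda_i;P_i \mid \sum_{i\in I} p_i?\lambda_i;P_i \mid X \mid \mu X.P$; thread states additionally allow $\langle q!\lambda\rangle;P$ (output already selected). Network states $N ::= p[\![P]\!]\mid 0\mid N\parallel N$ (distinct locations, closed threads) modulo $\equiv$ (associativity, commutativity, unit $0$); $\mathrm{proc}(p,N)$ is the unique $P$ with $N\equiv p[\![P]\!]\parallel N'$. The choice transition is $p[\![\bigoplus_{i\in I}p_i!\lambda_i;P_i]\!]\parallel N \xrightarrow{\tau} p[\![\langle p_k!\lambda_k\rangle;P_k]\!]\parallel N$ for $k\in I$. Global types: $G ::= \mathbf{end} \mid \boxplus_{i\in I} p\to q_i{:}\lambda_i;G_i \mid X \mid \mu X.G$, $I$ finite nonempty, $p\neq q_i$, $\mu X.X$ and $\mu X.\mu Y.G$ excluded. Participants: $\mathrm{pt}(\mathbf{end})=\mathrm{pt}(X)=\emptyset$, $\mathrm{pt}(\mu X.G)=\mathrm{pt}(G)$, $\mathrm{pt}(\boxplus_{i\in I}p\to q_i{:}\lambda_i;G_i)=\bigcup_{i}(\{p,q_i\}\cup\mathrm{pt}(G_i))$.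 Projection types are like threads but with receives only of the unary form $p?\lambda;Q$, plus a merge $\sqcap_{i\in I}Q_i$. Projection $G\upharpoonright r$: $\mathbf{end}\upharpoonright r=\mathbf{end}$; $X\upharpoonright r=X$; $(\mu X.G)\upharpoonright r=\mathbf{end}$ if $r\notin\mathrm{pt}(G)$ and $\mu X.G$ is closed, else $\mu X.(G\upharpoonright r)$; $(\boxplus_{i\in I}p\to q_i{:}\lambda_i;G_i)\upharpoonright r$ equals $\bigoplus_{i\in I}q_i!\lambda_i;(G_i\upharpoonright r)$ if $r=p$, and otherwise $\sqcap_{i\in I}((p\to q_i{:}\lambda_i;G_i)\upharpoonright r)$, where $(p\to q{:}\lambda;G)\upharpoonright r$ is $p?\lambda;(G\upharpoonright r)$ if $r=q$ and $G\upharpoonright r$ if $r\notin\{p,q\}$. The judgement $P\vdash Q$ (thread state vs projection type) is the largest relation closed under: $P\{\mu X.P/X\}\vdash Q \Rightarrow \mu X.P\vdash Q$; $P\vdash Q\{\mu X.Q/X\}\Rightarrow P\vdash \mu X.Q$; $\mathbf{end}\vdash\mathbf{end}$; ($i\in I$, $P_i\vdash Q_i$) $\Rightarrow \sum_{i\in I}p_i?\lambda_i;P_i\vdash p_i?\lambda_i;Q_i$; ($I\subseteq J$, $P_i\vdash Q_i$ for all $i\in I$) $\Rightarrow \bigoplus_{i\in I}p_i!\lambda_i;P_i\vdash\bigoplus_{i\in J}p_i!\lambda_i;Q_i$; ($P\vdash Q_i$ for all $i\in I$) $\Rightarrow P\vdash\sqcap_{i\in I}Q_i$; ($k\in I$,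 $P_k\vdash Q_k$) $\Rightarrow \langle q_k!\lambda_k\rangle;P_k\vdash\bigoplus_{i\in I}q_i!\lambda_i;Q_i$. A projection type is guarded if every occurrence of a variable $X$ inside a subexpression $\mu X.Q$ lies within a subexpression $p!\lambda;Q'$ or $p?\lambda;Q'$. For a network state $N$ with locations $p_1,\dots,p_n$: $N\vdash G$ if $G$ is closed, $\mathrm{pt}(G)\subseteq\{p_1,\dots,p_n\}$ and $\mathrm{proc}(p_i,N)\vdash G\upharpoonright p_i$ for all $i$; $N\vdash_g G$ if moreover every $G\upharpoonright p_i$ is guarded. *)

theory Defs
  imports Main
begin

(* Choices over a finite index set are represented by lists of
   (participant, label, continuation) triples; recursion variables are nat. *)
datatype ('p, 'l) thread =
    TEnd
  | TSend "('p \<times> 'l \<times> ('p, 'l) thread) list"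
  | TRecv "('p \<times> 'l \<times> ('p, 'l) thread) list"
  | TVar nat
  | TMu nat "('p, 'l) thread"
  | TSel 'p 'l "('p, 'l) thread"                    (* <q!\<lambda>>;P, output already selected *)

fun tfv :: "('p, 'l) thread \<Rightarrow> nat set" where
  "tfv TEnd = {}"
| "tfv (TSend cs) = (\<Union>c\<in>set cs. tfv (snd (snd c)))"
| "tfv (TRecv cs) = (\<Union>c\<in>set cs. tfv (snd (snd c)))"
| "tfv (TVar X) = {X}"
| "tfv (TMu X P) = tfv P - {X}"
| "tfv (TSel q l P) = tfv P"

fun no_sel :: "('p, 'l) thread \<Rightarrow> bool" where
  "no_sel TEnd = True"
| "no_sel (TSend cs) = (\<forall>c\<in>set cs. no_sel (snd (snd c)))"
| "no_sel (TRecv cs) = (\<forall>c\<in>set cs. no_sel (snd (snd c)))"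
| "no_sel (TVar X) = True"
| "no_sel (TMu X P) = no_sel P"
| "no_sel (TSel q l P) = False"

definition thread_state :: "('p, 'l) thread \<Rightarrow> bool" where
  "thread_state P \<longleftrightarrow> no_sel P \<or> (\<exists>q l P'. P = TSel q l P' \<and> no_sel P')"

(* substitution P{S/X}; only ever used with closed S, so no capture can occur *)
fun tsubst :: "nat \<Rightarrow> ('p, 'l) thread \<Rightarrow> ('p, 'l) thread \<Rightarrow> ('p, 'l) thread" where
  "tsubst X S TEnd = TEnd"
| "tsubst X S (TSend cs) = TSend (map (\<lambda>(q, l, P). (q, l, tsubst X S P)) cs)"
| "tsubst X S (TRecv cs) = TRecv (map (\<lambda>(q, l, P). (q, l, tsubst X S P)) cs)"
| "tsubst X S (TVar Y) = (if X = Y then S else TVar Y)"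
| "tsubst X S (TMu Y P) = (if X = Y then TMu Y P else TMu Y (tsubst X S P))"
| "tsubst X S (TSel q l P) = TSel q l (tsubst X S P)"

datatype ('p, 'l) gtype =
    GEnd
  | GCom 'p "('p \<times> 'l \<times> ('p, 'l) gtype) list"
  | GVar nat
  | GMu nat "('p, 'l) gtype"

fun gfv :: "('p, 'l) gtype \<Rightarrow> nat set" where
  "gfv GEnd = {}"
| "gfv (GCom p cs) = (\<Union>c\<in>set cs. gfv (snd (snd c)))"
| "gfv (GVar X) = {X}"
| "gfv (GMu X G) = gfv G - {X}"

fun pt :: "('p, 'l) gtype \<Rightarrow> 'p set" where
  "pt GEnd = {}"
| "pt (GVar X) = {}"
| "pt (GMu X G) = pt G"
| "pt (GCom p cs) = (\<Union>c\<in>set cs. {p, fst c} \<union> pt (snd (snd c)))"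

fun wf_gtype :: "('p, 'l) gtype \<Rightarrow> bool" where
  "wf_gtype GEnd = True"
| "wf_gtype (GVar X) = True"
| "wf_gtype (GCom p cs) = (cs \<noteq> [] \<and> (\<forall>c\<in>set cs. p \<noteq> fst c \<and> wf_gtype (snd (snd c))))"
| "wf_gtype (GMu X G) = ((\<forall>Y. G \<noteq> GVar Y) \<and> (\<forall>Y G'. G \<noteq> GMu Y G') \<and> wf_gtype G)"

datatype ('p, 'l) ptype =
    PEnd
  | PSend "('p \<times> 'l \<times> ('p, 'l) ptype) list"
  | PRecv 'p 'l "('p, 'l) ptype"
  | PVar nat
  | PMu nat "('p, 'l) ptype"
  | PMerge "('p, 'l) ptype list"

fun psubst :: "nat \<Rightarrow> ('p, 'l) ptype \<Rightarrow> ('p, 'l) ptype \<Rightarrow> ('p, 'l) ptype" where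
  "psubst X S PEnd = PEnd"
| "psubst X S (PSend cs) = PSend (map (\<lambda>(q, l, Q). (q, l, psubst X S Q)) cs)"
| "psubst X S (PRecv q l Q) = PRecv q l (psubst X S Q)"
| "psubst X S (PVar Y) = (if X = Y then S else PVar Y)"
| "psubst X S (PMu Y Q) = (if X = Y then PMu Y Q else PMu Y (psubst X S Q))"
| "psubst X S (PMerge Qs) = PMerge (map (psubst X S) Qs)"

fun proj :: "('p, 'l) gtype \<Rightarrow> 'p \<Rightarrow> ('p, 'l) ptype" where
  "proj GEnd r = PEnd"
| "proj (GVar X) r = PVar X"
| "proj (GMu X G) r =
     (if r \<notin> pt G \<and> gfv (GMu X G) = {} then PEnd else PMu X (proj G r))"
| "proj (GCom p cs) r =
     (if r = p then PSend (map (\<lambda>(q, l, G). (q, l, proj G r)) cs)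
      else PMerge (map (\<lambda>(q, l, G). if r = q then PRecv p l (proj G r) else proj G r) cs))"

fun ufv :: "('p, 'l) ptype \<Rightarrow> nat set" where
  "ufv PEnd = {}"
| "ufv (PSend cs) = {}"
| "ufv (PRecv q l Q) = {}"
| "ufv (PVar X) = {X}"
| "ufv (PMu X Q) = ufv Q - {X}"
| "ufv (PMerge Qs) = (\<Union>Q\<in>set Qs. ufv Q)"

fun pguarded :: "('p, 'l) ptype \<Rightarrow> bool" where
  "pguarded PEnd = True"
| "pguarded (PSend cs) = (\<forall>c\<in>set cs. pguarded (snd (snd c)))"
| "pguarded (PRecv q l Q) = pguarded Q"
| "pguarded (PVar X) = True"
| "pguarded (PMu X Q) = (X \<notin> ufv Q \<and> pguarded Q)"
| "pguarded (PMerge Qs) = (\<forall>Q\<in>set Qs. pguarded Q)"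

coinductive has_type :: "('p, 'l) thread \<Rightarrow> ('p, 'l) ptype \<Rightarrow> bool" where
  mu_l: "has_type (tsubst X (TMu X P) P) Q \<Longrightarrow> has_type (TMu X P) Q"
| mu_r: "has_type P (psubst X (PMu X Q) Q) \<Longrightarrow> has_type P (PMu X Q)"
| end_end: "has_type TEnd PEnd"
| recv: "\<lbrakk> k < length cs; cs ! k = (p, l, P); has_type P Q \<rbrakk>
         \<Longrightarrow> has_type (TRecv cs) (PRecv p l Q)"
| send: "\<lbrakk> inj_on f {..<length cs};
           \<forall>i<length cs. f i < length ds \<and> fst (ds ! f i) = fst (cs ! i)
              \<and> fst (snd (ds ! f i)) = fst (snd (cs ! i))
              \<and> has_type (snd (snd (cs ! i))) (snd (snd (ds ! f i))) \<rbrakk>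
         \<Longrightarrow> has_type (TSend cs) (PSend ds)"
| merge: "\<forall>Q\<in>set Qs. has_type P Q \<Longrightarrow> has_type P (PMerge Qs)"
| sel: "\<lbrakk> k < length ds; ds ! k = (q, l, Q); has_type P Q \<rbrakk>
         \<Longrightarrow> has_type (TSel q l P) (PSend ds)"

(* a network state is a finite partial map from locations to closed thread
   states; this represents networks modulo structural congruence, and
   proc(p, N) = the (N p) *)
definition network :: "('p \<rightharpoonup> ('p, 'l) thread) \<Rightarrow> bool" where
  "network N \<longleftrightarrow> finite (dom N) \<and>
     (\<forall>p P. N p = Some P \<longrightarrow> thread_state P \<and> tfv P = {})"

definition choice_step :: "('p \<rightharpoonup> ('p, 'l) thread) \<Rightarrow> ('p \<rightharpoonup> ('p, 'l) thread) \<Rightarrow> bool" where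
  "choice_step N M \<longleftrightarrow> (\<exists>p cs k q l P. N p = Some (TSend cs) \<and> k < length cs \<and>
      cs ! k = (q, l, P) \<and> M = N(p \<mapsto> TSel q l P))"

definition net_typed :: "('p \<rightharpoonup> ('p, 'l) thread) \<Rightarrow> ('p, 'l) gtype \<Rightarrow> bool" where
  "net_typed N G \<longleftrightarrow> gfv G = {} \<and> pt G \<subseteq> dom N \<and>
     (\<forall>p P. N p = Some P \<longrightarrow> has_type P (proj G p))"

definition net_typed_g :: "('p \<rightharpoonup> ('p, 'l) thread) \<Rightarrow> ('p, 'l) gtype \<Rightarrow> bool" where
  "net_typed_g N G \<longleftrightarrow> net_typed N G \<and> (\<forall>p\<in>dom N. pguarded (proj G p))"

end

theory Submission
  imports Defs
begin

text \<open>A typing derivation for an unselected choice \<open>\<Oplus>\<^sub>i q\<^sub>i!\<lambda>\<^sub>i;P\<^sub>i\<close> reaches, after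
  unfolding recursions and merges of the projection, an instance of the send rule; its
  component for branch \<open>k\<close> is exactly the premise of the selection rule for
  \<open>\<langle>q\<^sub>k!\<lambda>\<^sub>k\<rangle>;P\<^sub>k\<close>. So the selected thread has the same projection type, and since no
  other location and not the global type change, typability and guardedness persist.\<close>

lemma has_type_TSel_of_TSend:
  assumes "has_type (TSend cs) Q" and "(q, l, P) \<in> set cs"
  shows "has_type (TSel q l P) Q"
  using assms
proof (coinduction arbitrary: Q rule: has_type.coinduct)
  case (has_type Q)
  \<comment> \<open>the disjuncts of the goal follow the rule order mu_l, mu_r, end_end, recv, send, merge, sel\<close>
  from has_type(1) show ?case
  proof (cases rule: has_type.cases)
    case (mu_r X Q')
    then show ?thesis using has_type(2) by - (rule disjI2, rule disjI1, blast)
  next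
    case (send f ds)
    obtain k where k: "k < length cs" "cs ! k = (q, l, P)"
      using has_type(2) by (auto simp: in_set_conv_nth)
    obtain Q' where "f k < length ds" "ds ! f k = (q, l, Q')" "has_type P Q'"
      using send(3)[rule_format, OF k(1)] k(2) by (metis prod.collapse fst_conv snd_conv)
    with send(1) show ?thesis by - (intro disjI2, blast)
  next
    case (merge Qs)
    then show ?thesis using has_type(2)
      by - (rule disjI2, rule disjI2, rule disjI2, rule disjI2, rule disjI2, rule disjI1, blast)
  qed
qed

lemma net_typed_g_fun_upd:
  assumes "net_typed_g N G" and "p \<in> dom N" and "has_type P (proj G p)"
  shows "net_typed_g (N(p \<mapsto> P)) G"
proof -
  have "dom (N(p \<mapsto> P)) = dom N"
    using assms(2) by auto
  then show ?thesis
    using assms(1,3) unfolding net_typed_g_def net_typed_def by auto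
qed

theorem mainTheorem11:
  fixes N M :: "'p \<rightharpoonup> ('p, 'l) thread" and G :: "('p, 'l) gtype"
  assumes "network N"
    and "wf_gtype G"
    and "choice_step N M"
    and "net_typed_g N G"
  shows "net_typed_g M G"
proof -
  obtain p cs k q l P where p: "N p = Some (TSend cs)"
    and k: "k < length cs" "cs ! k = (q, l, P)" and M: "M = N(p \<mapsto> TSel q l P)"
    using assms(3) unfolding choice_step_def by blast
  have "has_type (TSend cs) (proj G p)"
    using assms(4) p unfolding net_typed_g_def net_typed_def by blast
  moreover have "(q, l, P) \<in> set cs"
    using k by (metis nth_mem)
  ultimately have "has_type (TSel q l P) (proj G p)"
    by (rule has_type_TSel_of_TSend)
  with assms(4) p show ?thesis
    unfolding M by (blast intro: net_typed_g_fun_upd)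
qed

end
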